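(* Let $G$ and $H$ be dicotic nonzugzwang scoring games all of whose terminal positions are numbers. Then for every $t\geq 0$, $Ls((G+H)_t)=Ls(G_t+H_t)$ and $Rs((G+H)_t)=Rs(G_t+H_t)$. Moreover $\sigma(G+H)\leq\max(\sigma(G),\sigma(H))$, and if $\sigma(H)<\sigma(G)$ then $\sigma(G+H)=\sigma(G)$. In particular, $(G+H)_{\sigma(G+H)}=G_{\sigma(G)}+H_{\sigma(H)}$.
   Context: A scoring game is $G=\langle G^L\mid G^R\rangle$ with $G^L,G^R$ finite nonempty sets of scoring games or empty sets decorated with a real, $\emptyset^s$; $\langle\emptyset^s\mid\emptyset^s\rangle$ is the number $s$. $Ls(\langle\emptyset^s\mid G^R\rangle)=s$, $Rs(\langle G^L\mid\emptyset^s\rangle)=s$, otherwise $Ls(G)=\max_{G^l\in G^L}Rs(G^l)$, $Rs(G)=\min_{G^r\in G^R}Ls(G^r)$. Disjunctive sum $G_1+G_2$: Left options are all $G_1^l+G_2$ and $G_1+G_2^l$, and if neither component has a Left option the Left side is $\emptyset^{\ell_1+\ell_2}$ ($\emptyset^{\ell_i}$ the Left side of $G_i$); symmetrically for Right. In particular $H+c$ for a number $c$ adds $c$ to every terminal score. Dicotic: at every position both players have options or neither; nonzugzwang: $Ls(H)\ge Rs(H)$ at every position $H$. Cooling: if $G$ is a number $k$, $G_t=k$ and $\sigma(G)=0$. Otherwise $\widetilde G_t=\langle \{G^l_t-t\}_{G^l\in G^L}\mid \{G^r_t+t\}_{G^r\in G^R}\rangle$, $t_0=\min\{t\ge0: Ls(\widetilde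 G_t)=Rs(\widetilde G_t)\}$ (exists for dicotic nonzugzwang games), $G_t=\widetilde G_t$ for $t\le t_0$ and $G_t$ is the number $Ls(\widetilde G_{t_0})$ for $t>t_0$; $\sigma(G)=t_0$ is the temperature. For $t\geq\sigma(G)$, $G_t$ is a number. *)

theory Defs
  imports Complex_Main
begin

text \<open>A side is either a finite nonempty set of
  options (represented by a list, Inl) or an empty set decorated with a real score
  (Inr s, i.e. the empty set with superscript s). Nonemptiness of option lists is
  imposed by the well-formedness predicate is_sg.\<close>

datatype sg = SG (lside: "sg list + real") (rside: "sg list + real")

definition lopts :: "sg \<Rightarrow> sg list" where
  "lopts G = (case lside G of Inl xs \<Rightarrow> xs | Inr _ \<Rightarrow> [])"

definition ropts :: "sg \<Rightarrow> sg list" where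
  "ropts G = (case rside G of Inl xs \<Rightarrow> xs | Inr _ \<Rightarrow> [])"

definition lemp :: "sg \<Rightarrow> real" where
  "lemp G = (case lside G of Inl _ \<Rightarrow> 0 | Inr s \<Rightarrow> s)"

definition remp :: "sg \<Rightarrow> real" where
  "remp G = (case rside G of Inl _ \<Rightarrow> 0 | Inr s \<Rightarrow> s)"

lemma size_lopts: "g \<in> set (lopts G) \<Longrightarrow> size g < size G"
proof (cases G)
  case (SG L R)
  assume g: "g \<in> set (lopts G)"
  then obtain xs where xs: "lside G = Inl xs" "g \<in> set xs"
    by (auto simp: lopts_def split: sum.splits dest: sym)
  have "size g \<le> size_list size xs"
    using xs(2) by (rule size_list_estimation') simp
  then show ?thesis using xs(1) SG by auto
qed

lemma size_ropts: "g \<in> set (ropts G) \<Longrightarrow> size g < size G"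
proof (cases G)
  case (SG L R)
  assume g: "g \<in> set (ropts G)"
  then obtain xs where xs: "rside G = Inl xs" "g \<in> set xs"
    by (auto simp: ropts_def split: sum.splits dest: sym)
  have "size g \<le> size_list size xs"
    using xs(2) by (rule size_list_estimation') simp
  then show ?thesis using xs(1) SG by auto
qed

definition num :: "real \<Rightarrow> sg" where
  "num s = SG (Inr s) (Inr s)"

definition is_num :: "sg \<Rightarrow> bool" where
  "is_num G \<longleftrightarrow> (\<exists>s. G = num s)"

fun all_pos :: "(sg \<Rightarrow> bool) \<Rightarrow> sg \<Rightarrow> bool" where
  "all_pos P (SG L R) \<longleftrightarrow> P (SG L R)
     \<and> (case L of Inl xs \<Rightarrow> (\<forall>g\<in>set xs. all_pos P g) | Inr _ \<Rightarrow> True)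
     \<and> (case R of Inl xs \<Rightarrow> (\<forall>g\<in>set xs. all_pos P g) | Inr _ \<Rightarrow> True)"

definition is_sg :: "sg \<Rightarrow> bool" where
  "is_sg G \<longleftrightarrow> all_pos (\<lambda>H. lside H \<noteq> Inl [] \<and> rside H \<noteq> Inl []) G"

fun Ls :: "sg \<Rightarrow> real" and Rs :: "sg \<Rightarrow> real" where
  "Ls (SG L R) = (case L of Inr s \<Rightarrow> s | Inl xs \<Rightarrow> Max (set (map Rs xs)))"
| "Rs (SG L R) = (case R of Inr s \<Rightarrow> s | Inl xs \<Rightarrow> Min (set (map Ls xs)))"

definition dicotic :: "sg \<Rightarrow> bool" where
  "dicotic G \<longleftrightarrow> all_pos (\<lambda>H. (lopts H = []) \<longleftrightarrow> (ropts H = [])) G"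

definition nonzugzwang :: "sg \<Rightarrow> bool" where
  "nonzugzwang G \<longleftrightarrow> all_pos (\<lambda>H. Ls H \<ge> Rs H) G"

definition terminal_numbers :: "sg \<Rightarrow> bool" where
  "terminal_numbers G \<longleftrightarrow> all_pos (\<lambda>H. lopts H = [] \<and> ropts H = [] \<longrightarrow> is_num H) G"

function gsum :: "sg \<Rightarrow> sg \<Rightarrow> sg" where
  "gsum G H = SG
     (if lopts G = [] \<and> lopts H = [] then Inr (lemp G + lemp H)
      else Inl (map (\<lambda>g. gsum g H) (lopts G) @ map (\<lambda>h. gsum G h) (lopts H)))
     (if ropts G = [] \<and> ropts H = [] then Inr (remp G + remp H)
      else Inl (map (\<lambda>g. gsum g H) (ropts G) @ map (\<lambda>h. gsum G h) (ropts H)))"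
  by auto
termination
  by (relation "measure (\<lambda>(G, H). size G + size H)")
     (auto dest: size_lopts size_ropts)

text \<open>H + c for a number c: add c to every terminal score.\<close>
fun shift :: "real \<Rightarrow> sg \<Rightarrow> sg" where
  "shift c (SG L R) = SG
     (case L of Inl xs \<Rightarrow> Inl (map (shift c) xs) | Inr s \<Rightarrow> Inr (s + c))
     (case R of Inl xs \<Rightarrow> Inl (map (shift c) xs) | Inr s \<Rightarrow> Inr (s + c))"

function cool :: "sg \<Rightarrow> real \<Rightarrow> sg" where
  "cool G t =
    (if is_num G then G
     else
       (let tl = (\<lambda>s. SG
                 (case lside G of Inl xs \<Rightarrow> Inl (map (\<lambda>g. shift (- s) (cool g s)) xs) | Inr a \<Rightarrow> Inr a)
                 (case rside G of Inl xs \<Rightarrow> Inl (map (\<lambda>g. shift s (cool g s)) xs) | Inr a \<Rightarrow> Inr a));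
            t0 = (LEAST s. 0 \<le> s \<and> Ls (tl s) = Rs (tl s))
        in if t \<le> t0 then tl t else num (Ls (tl t0))))"
  by auto
termination
  by (relation "measure (\<lambda>(G, t). size G)")
     (auto intro: size_lopts size_ropts simp: lopts_def ropts_def)

definition cool_tilde :: "sg \<Rightarrow> real \<Rightarrow> sg" where
  "cool_tilde G s = SG
     (case lside G of Inl xs \<Rightarrow> Inl (map (\<lambda>g. shift (- s) (cool g s)) xs) | Inr a \<Rightarrow> Inr a)
     (case rside G of Inl xs \<Rightarrow> Inl (map (\<lambda>g. shift s (cool g s)) xs) | Inr a \<Rightarrow> Inr a)"

definition temp :: "sg \<Rightarrow> real" where
  "temp G = (if is_num G then 0
             else (LEAST s. 0 \<le> s \<and> Ls (cool_tilde G s) = Rs (cool_tilde G s)))"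

end

theory Submission
  imports Defs "HOL-Analysis.Lipschitz"
begin

text \<open>For dicotic nonzugzwang games ending in numbers the stops of a sum are squeezed
  between sums of stops (e.g. Ls X + Rs Y \<le> Ls (X + Y) \<le> Ls X + Ls Y), and cooling moves
  the Left stop down and the Right stop up, each at rate at most 1. Hence the gap
  Ls - Rs of the auxiliary game tilde G_t is continuous and antitone in t, and the
  temperature is its first zero: K_t has equal stops exactly when t \<ge> \<sigma>(K).

  The options of tilde (G + H)_t are the cooled options (G' + H)_t, which by induction
  may be replaced by G'_t + H_t. Up to t = max(\<sigma>(G), \<sigma>(H)) the resulting game
  has the stops of G_t + H_t: it is literally G_t + H_t while both summands are hot, and
  once one summand has frozen to a number, the options coming from it are dominated by
  those coming from the other summand. Beyond that point both sides are frozen at the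
  same number. The claims about \<sigma>(G + H) then follow
  from the characterisation of the temperature by equal stops.\<close>

declare cool.simps [simp del] gsum.simps [simp del]

section \<open>Dicotic nonzugzwang games\<close>

definition dnz :: "sg \<Rightarrow> bool" where
  "dnz X \<longleftrightarrow> is_sg X \<and> dicotic X \<and> nonzugzwang X \<and> terminal_numbers X"

lemma Ls_num [simp]: "Ls (num s) = s" and Rs_num [simp]: "Rs (num s) = s"
  by (simp_all add: num_def)

lemma dnz_num [simp]: "dnz (num s)"
  by (simp add: dnz_def num_def is_sg_def dicotic_def nonzugzwang_def terminal_numbers_def
      lopts_def ropts_def is_num_def)

lemma dnz_SG_iff:
  "dnz (SG (Inl xs) (Inl ys)) \<longleftrightarrow> xs \<noteq> [] \<and> ys \<noteq> []
     \<and> Rs (SG (Inl xs) (Inl ys)) \<le> Ls (SG (Inl xs) (Inl ys)) \<and> (\<forall>g \<in> set xs \<union> set ys. dnz g)"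
  unfolding dnz_def is_sg_def dicotic_def nonzugzwang_def terminal_numbers_def
  by (auto simp: lopts_def ropts_def simp del: Ls.simps Rs.simps)

lemma dnz_cases [consumes 1, case_names num SG]:
  assumes "dnz X"
  obtains (num) s where "X = num s"
  | (SG) xs ys where "X = SG (Inl xs) (Inl ys)" "xs \<noteq> []" "ys \<noteq> []" "Rs X \<le> Ls X"
      "\<forall>g \<in> set xs \<union> set ys. dnz g"
proof -
  have "(\<exists>s. X = num s) \<or> (\<exists>xs ys. X = SG (Inl xs) (Inl ys))"
  proof (cases X)
    case (SG L R)
    with assms show ?thesis
      unfolding dnz_def is_sg_def dicotic_def terminal_numbers_def
      by (cases L; cases R) (auto simp: lopts_def ropts_def is_num_def)
  qed
  with assms that show thesis
    by (auto simp: dnz_SG_iff)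
qed

lemma dnz_Rs_le_Ls: "dnz X \<Longrightarrow> Rs X \<le> Ls X"
  by (erule dnz_cases) simp_all

lemma size_SG_option: "g \<in> set xs \<union> set ys \<Longrightarrow> size g < size (SG (Inl xs) (Inl ys))"
  using size_lopts[of g "SG (Inl xs) (Inl ys)"] size_ropts[of g "SG (Inl xs) (Inl ys)"]
  by (auto simp: lopts_def ropts_def)

lemma dnz_induct [consumes 1, case_names num SG]:
  assumes "dnz X"
    and "\<And>s. P (num s)"
    and "\<And>xs ys. dnz (SG (Inl xs) (Inl ys)) \<Longrightarrow> (\<And>g. g \<in> set xs \<union> set ys \<Longrightarrow> P g)
           \<Longrightarrow> P (SG (Inl xs) (Inl ys))"
  shows "P X"
  using assms(1)
proof (induction "size X" arbitrary: X rule: less_induct)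
  case less
  from less.prems show ?case
  proof (cases rule: dnz_cases)
    case (SG xs ys)
    then show ?thesis
      using assms(3) less.hyps size_SG_option less.prems by blast
  qed (simp add: assms(2))
qed

lemma dnz_pair_induct [consumes 2, case_names num_left num_right SG_SG]:
  assumes "dnz X" "dnz Y"
    and "\<And>x Y. dnz Y \<Longrightarrow> P (num x) Y"
    and "\<And>X y. dnz X \<Longrightarrow> P X (num y)"
    and "\<And>X Y xs ys us vs. X = SG (Inl xs) (Inl ys) \<Longrightarrow> Y = SG (Inl us) (Inl vs)
           \<Longrightarrow> xs \<noteq> [] \<Longrightarrow> ys \<noteq> [] \<Longrightarrow> us \<noteq> [] \<Longrightarrow> vs \<noteq> [] \<Longrightarrow> dnz X \<Longrightarrow> dnz Y
           \<Longrightarrow> (\<And>g. g \<in> set xs \<union> set ys \<Longrightarrow> P g Y) \<Longrightarrow> (\<And>h. h \<in> set us \<union> set vs \<Longrightarrow> P X h)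
           \<Longrightarrow> P X Y"
  shows "P X Y"
  using assms(1,2)
proof (induction "size X + size Y" arbitrary: X Y rule: less_induct)
  case less
  from less.prems(1) show ?case
  proof (cases rule: dnz_cases)
    case X: (SG xs ys)
    from less.prems(2) show ?thesis
    proof (cases rule: dnz_cases)
      case Y: (SG us vs)
      show ?thesis
      proof (rule assms(5)[OF X(1) Y(1) X(2,3) Y(2,3) less.prems])
        show "P g Y" if "g \<in> set xs \<union> set ys" for g
          using less.hyps[of g Y] size_SG_option[OF that] that X Y less.prems(2) by auto
        show "P X h" if "h \<in> set us \<union> set vs" for h
          using less.hyps[of X h] size_SG_option[OF that] that X Y less.prems(1) by auto
      qed
    qed (use assms(4) less.prems in simp)
  qed (use assms(3) less.prems in simp)
qed

lemma le_Ls_iff: "xs \<noteq> [] \<Longrightarrow> c \<le> Ls (SG (Inl xs) R) \<longleftrightarrow> (\<exists>x \<in> set xs. c \<le> Rs x)"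
  by (simp add: Max_ge_iff)

lemma Ls_le_iff: "xs \<noteq> [] \<Longrightarrow> Ls (SG (Inl xs) R) \<le> c \<longleftrightarrow> (\<forall>x \<in> set xs. Rs x \<le> c)"
  by (simp add: Max_le_iff)

lemma le_Rs_iff: "ys \<noteq> [] \<Longrightarrow> c \<le> Rs (SG L (Inl ys)) \<longleftrightarrow> (\<forall>y \<in> set ys. c \<le> Ls y)"
  by (simp add: Min_ge_iff)

lemma Rs_le_iff: "ys \<noteq> [] \<Longrightarrow> Rs (SG L (Inl ys)) \<le> c \<longleftrightarrow> (\<exists>y \<in> set ys. Ls y \<le> c)"
  by (simp add: Min_le_iff)

lemma Ls_SG_cong: "Rs ` set xs = Rs ` set xs' \<Longrightarrow> Ls (SG (Inl xs) R) = Ls (SG (Inl xs') R')"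
  by simp

lemma Rs_SG_cong: "Ls ` set ys = Ls ` set ys' \<Longrightarrow> Rs (SG L (Inl ys)) = Rs (SG L' (Inl ys'))"
  by simp

lemma Ls_SG_append_dominated:
  assumes "xs \<noteq> []" "\<forall>a \<in> set as. Rs a \<le> Ls (SG (Inl xs) R)"
  shows "Ls (SG (Inl (as @ xs)) R') = Ls (SG (Inl xs) R)"
  using assms by (auto intro!: Max_eqI Max_in)

lemma Rs_SG_append_dominated:
  assumes "ys \<noteq> []" "\<forall>a \<in> set as. Rs (SG L (Inl ys)) \<le> Ls a"
  shows "Rs (SG L' (Inl (as @ ys))) = Rs (SG L (Inl ys))"
  using assms by (auto intro!: Min_eqI Min_in)

declare Ls.simps [simp del] Rs.simps [simp del]

section \<open>Translation and disjunctive sum\<close>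

lemma shift_num [simp]: "shift c (num s) = num (s + c)"
  by (simp add: num_def)

lemma shift_SG [simp]:
  "shift c (SG (Inl xs) (Inl ys)) = SG (Inl (map (shift c) xs)) (Inl (map (shift c) ys))"
  by simp

lemma shift_shift: "shift a (shift b X) = shift (b + a) X"
proof (induction X)
  case (SG L R)
  then show ?case by (cases L; cases R) (auto simp: algebra_simps)
qed

lemma stops_shift_SG:
  assumes "xs \<noteq> []" "ys \<noteq> []"
    and "\<forall>g \<in> set xs \<union> set ys. Ls (shift c g) = Ls g + c \<and> Rs (shift c g) = Rs g + c"
  shows "Ls (shift c (SG (Inl xs) (Inl ys))) = Ls (SG (Inl xs) (Inl ys)) + c
    \<and> Rs (shift c (SG (Inl xs) (Inl ys))) = Rs (SG (Inl xs) (Inl ys)) + c"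
  using assms by (simp add: Ls.simps Rs.simps image_image Max_add_commute Min_add_commute cong: image_cong)

lemma stops_shift: "dnz X \<Longrightarrow> Ls (shift c X) = Ls X + c \<and> Rs (shift c X) = Rs X + c"
proof (induction rule: dnz_induct)
  case (SG xs ys)
  then show ?case
    by (intro stops_shift_SG) (simp_all add: dnz_SG_iff)
qed simp

lemma Ls_shift: "dnz X \<Longrightarrow> Ls (shift c X) = Ls X + c"
  and Rs_shift: "dnz X \<Longrightarrow> Rs (shift c X) = Rs X + c"
  using stops_shift by blast+

lemma dnz_shift: "dnz X \<Longrightarrow> dnz (shift c X)"
proof (induction rule: dnz_induct)
  case (SG xs ys)
  then show ?case
    using Ls_shift[OF SG.hyps] Rs_shift[OF SG.hyps] by (auto simp: dnz_SG_iff)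
qed simp

lemma gsum_SG:
  assumes "xs \<noteq> []" "ys \<noteq> []"
  shows "gsum (SG (Inl xs) (Inl ys)) (SG (Inl us) (Inl vs)) =
    SG (Inl (map (\<lambda>g. gsum g (SG (Inl us) (Inl vs))) xs @ map (gsum (SG (Inl xs) (Inl ys))) us))
       (Inl (map (\<lambda>g. gsum g (SG (Inl us) (Inl vs))) ys @ map (gsum (SG (Inl xs) (Inl ys))) vs))"
  using assms by (subst gsum.simps) (simp add: lopts_def ropts_def)

lemma gsum_num_left: "dnz Y \<Longrightarrow> gsum (num x) Y = shift x Y"
proof (induction rule: dnz_induct)
  case (num s)
  then show ?case
    by (subst gsum.simps) (simp add: num_def lopts_def ropts_def lemp_def remp_def add.commute)
qed (subst gsum.simps, simp add: num_def lopts_def ropts_def dnz_SG_iff)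

lemma gsum_num_right: "dnz X \<Longrightarrow> gsum X (num y) = shift y X"
proof (induction rule: dnz_induct)
  case (num s)
  then show ?case
    by (subst gsum.simps) (simp add: num_def lopts_def ropts_def lemp_def remp_def)
qed (subst gsum.simps, simp add: num_def lopts_def ropts_def dnz_SG_iff)

lemma gsum_stops_lower:
  assumes "dnz X" "dnz Y"
  shows "Ls X + Rs Y \<le> Ls (gsum X Y) \<and> Rs X + Ls Y \<le> Ls (gsum X Y) \<and> Rs X + Rs Y \<le> Rs (gsum X Y)"
  using assms
proof (induction rule: dnz_pair_induct)
  case (num_left x Y)
  then show ?case using dnz_Rs_le_Ls[of Y] by (simp add: gsum_num_left Ls_shift Rs_shift)
next
  case (num_right X y)
  then show ?case using dnz_Rs_le_Ls[of X] by (simp add: gsum_num_right Ls_shift Rs_shift)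
next
  case (SG_SG X Y xs ys us vs)
  have sum: "gsum X Y = SG (Inl (map (\<lambda>g. gsum g Y) xs @ map (gsum X) us))
                           (Inl (map (\<lambda>g. gsum g Y) ys @ map (gsum X) vs))"
    using SG_SG.hyps(1-4) by (simp add: gsum_SG)
  obtain g where g: "g \<in> set xs" "Ls X \<le> Rs g"
    using le_Ls_iff[OF \<open>xs \<noteq> []\<close>, of "Ls X"] \<open>X = SG (Inl xs) (Inl ys)\<close> by auto
  obtain h where h: "h \<in> set us" "Ls Y \<le> Rs h"
    using le_Ls_iff[OF \<open>us \<noteq> []\<close>, of "Ls Y"] \<open>Y = SG (Inl us) (Inl vs)\<close> by auto
  have "Ls X + Rs Y \<le> Rs (gsum g Y)"
    using g SG_SG.IH(1)[of g] by fastforce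
  moreover have "Rs X + Ls Y \<le> Rs (gsum X h)"
    using h SG_SG.IH(2)[of h] by fastforce
  moreover have "Rs X + Rs Y \<le> Ls (gsum g Y)" if "g \<in> set ys" for g
    using that SG_SG.IH(1)[of g] le_Rs_iff[OF \<open>ys \<noteq> []\<close>, of "Rs X"] SG_SG.hyps(1)
    by fastforce
  moreover have "Rs X + Rs Y \<le> Ls (gsum X h)" if "h \<in> set vs" for h
    using that SG_SG.IH(2)[of h] le_Rs_iff[OF \<open>vs \<noteq> []\<close>, of "Rs Y"] SG_SG.hyps(2)
    by fastforce
  ultimately show ?case
    using g(1) h(1) SG_SG.hyps(3,4) unfolding sum by (auto simp: le_Ls_iff le_Rs_iff)
qed

lemma gsum_stops_upper:
  assumes "dnz X" "dnz Y"
  shows "Rs (gsum X Y) \<le> Rs X + Ls Y \<and> Rs (gsum X Y) \<le> Ls X + Rs Y \<and> Ls (gsum X Y) \<le> Ls X + Ls Y"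
  using assms
proof (induction rule: dnz_pair_induct)
  case (num_left x Y)
  then show ?case using dnz_Rs_le_Ls[of Y] by (simp add: gsum_num_left Ls_shift Rs_shift)
next
  case (num_right X y)
  then show ?case using dnz_Rs_le_Ls[of X] by (simp add: gsum_num_right Ls_shift Rs_shift)
next
  case (SG_SG X Y xs ys us vs)
  have sum: "gsum X Y = SG (Inl (map (\<lambda>g. gsum g Y) xs @ map (gsum X) us))
                           (Inl (map (\<lambda>g. gsum g Y) ys @ map (gsum X) vs))"
    using SG_SG.hyps(1-4) by (simp add: gsum_SG)
  obtain g where g: "g \<in> set ys" "Ls g \<le> Rs X"
    using Rs_le_iff[OF \<open>ys \<noteq> []\<close>, of _ "Rs X"] \<open>X = SG (Inl xs) (Inl ys)\<close> by auto
  obtain h where h: "h \<in> set vs" "Ls h \<le> Rs Y"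
    using Rs_le_iff[OF \<open>vs \<noteq> []\<close>, of _ "Rs Y"] \<open>Y = SG (Inl us) (Inl vs)\<close> by auto
  have "Ls (gsum g Y) \<le> Rs X + Ls Y"
    using g SG_SG.IH(1)[of g] by fastforce
  moreover have "Ls (gsum X h) \<le> Ls X + Rs Y"
    using h SG_SG.IH(2)[of h] by fastforce
  moreover have "Rs (gsum g Y) \<le> Ls X + Ls Y" if "g \<in> set xs" for g
    using that SG_SG.IH(1)[of g] Ls_le_iff[OF \<open>xs \<noteq> []\<close>, of _ "Ls X"] SG_SG.hyps(1)
    by fastforce
  moreover have "Rs (gsum X h) \<le> Ls X + Ls Y" if "h \<in> set us" for h
    using that SG_SG.IH(2)[of h] Ls_le_iff[OF \<open>us \<noteq> []\<close>, of _ "Ls Y"] SG_SG.hyps(2)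
    by fastforce
  ultimately show ?case
    using g(1) h(1) SG_SG.hyps(3,4) unfolding sum by (auto simp: Ls_le_iff Rs_le_iff)
qed

lemma gsum_stops_frozen:
  assumes "dnz X" "dnz Y" "Ls Y = Rs Y"
  shows "Ls (gsum X Y) = Ls X + Ls Y \<and> Rs (gsum X Y) = Rs X + Ls Y"
  using gsum_stops_lower[OF assms(1,2)] gsum_stops_upper[OF assms(1,2)] assms(3) by linarith

lemma dnz_gsum: "dnz X \<Longrightarrow> dnz Y \<Longrightarrow> dnz (gsum X Y)"
proof (induction rule: dnz_pair_induct)
  case (SG_SG X Y xs ys us vs)
  have "Rs (gsum X Y) \<le> Ls (gsum X Y)"
    using gsum_stops_lower[OF SG_SG.hyps(7,8)] gsum_stops_upper[OF SG_SG.hyps(7,8)] by linarith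
  with SG_SG show ?case
    by (auto simp: gsum_SG dnz_SG_iff)
qed (simp_all add: gsum_num_left gsum_num_right dnz_shift)

lemma gsum_shift_left: "dnz X \<Longrightarrow> dnz Y \<Longrightarrow> gsum (shift c X) Y = shift c (gsum X Y)"
proof (induction rule: dnz_pair_induct)
  case (num_right X y)
  then show ?case
    by (simp add: gsum_num_right dnz_shift shift_shift add.commute del: shift_SG)
qed (simp_all add: gsum_SG gsum_num_left shift_shift)

lemma gsum_shift_right: "dnz X \<Longrightarrow> dnz Y \<Longrightarrow> gsum X (shift c Y) = shift c (gsum X Y)"
proof (induction rule: dnz_pair_induct)
  case (num_left x Y)
  then show ?case
    by (simp add: gsum_num_left dnz_shift shift_shift add.commute del: shift_SG)
qed (simp_all add: gsum_SG gsum_num_right shift_shift)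

section \<open>Cooling\<close>

lemma antitone_first_zero:
  fixes D :: "real \<Rightarrow> real"
  assumes cont: "continuous_on {0..} D"
    and anti: "\<And>s s'. 0 \<le> s \<Longrightarrow> s \<le> s' \<Longrightarrow> D s' \<le> D s"
    and "0 \<le> D 0" "0 \<le> b" "D b \<le> 0"
  defines "t \<equiv> LEAST s. 0 \<le> s \<and> D s = 0"
  shows "0 \<le> t \<and> D t = 0 \<and> (\<forall>s. 0 \<le> s \<and> s < t \<longrightarrow> 0 < D s)"
proof -
  define Z where "Z = {s \<in> {0..}. D s = 0}"
  obtain z where "0 \<le> z" "z \<le> b" "D z = 0"
    using IVT2'[of D b 0 0] assms continuous_on_subset[OF cont] by force
  then have "Z \<noteq> {}" by (auto simp: Z_def)
  moreover have "bdd_below Z"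
    by (auto simp: Z_def bdd_below_def)
  moreover have "closed Z"
    unfolding Z_def using cont closed_atLeast by (rule continuous_closed_preimage_constant)
  ultimately have "Inf Z \<in> Z"
    by (rule closed_contains_Inf)
  moreover have "t = Inf Z"
    unfolding t_def
    by (rule Least_equality) (use \<open>Inf Z \<in> Z\<close> \<open>bdd_below Z\<close> in \<open>auto simp: Z_def intro: cInf_lower\<close>)
  ultimately have t: "0 \<le> t" "D t = 0" "\<And>s. 0 \<le> s \<Longrightarrow> D s = 0 \<Longrightarrow> t \<le> s"
    using \<open>bdd_below Z\<close> by (auto simp: Z_def intro: cInf_lower)
  have "0 < D s" if "0 \<le> s" "s < t" for s
    using anti[of s t] t that by force
  with t show ?thesis
    by blast
qed

lemma is_num_num [simp]: "is_num (num s)"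
  by (auto simp: is_num_def)

lemma not_is_num_SG [simp]: "\<not> is_num (SG (Inl xs) (Inl ys))"
  by (auto simp: is_num_def num_def)

lemma cool_num [simp]: "cool (num s) t = num s"
  by (subst cool.simps) simp

lemma temp_num [simp]: "temp (num s) = 0"
  by (simp add: temp_def)

lemma cool_eq_cool_tilde:
  "\<not> is_num G \<Longrightarrow> cool G t = (if t \<le> temp G then cool_tilde G t else num (Ls (cool_tilde G (temp G))))"
  by (subst cool.simps) (simp add: Let_def temp_def cool_tilde_def)

lemma cool_tilde_SG: "cool_tilde (SG (Inl xs) (Inl ys)) s =
   SG (Inl (map (\<lambda>g. shift (- s) (cool g s)) xs)) (Inl (map (\<lambda>g. shift s (cool g s)) ys))"
  by (simp add: cool_tilde_def)

lemma cool_SG_upto_temp: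
  "t \<le> temp (SG (Inl xs) (Inl ys)) \<Longrightarrow>
   cool (SG (Inl xs) (Inl ys)) t = SG (Inl (map (\<lambda>g. shift (- t) (cool g t)) xs)) (Inl (map (\<lambda>g. shift t (cool g t)) ys))"
  by (simp add: cool_eq_cool_tilde cool_tilde_SG)

definition cool_stops_mono :: "sg \<Rightarrow> bool" where
  "cool_stops_mono G \<longleftrightarrow> (\<forall>s s'. 0 \<le> s \<longrightarrow> s \<le> s' \<longrightarrow>
     Ls (cool G s') \<le> Ls (cool G s) \<and> Ls (cool G s) \<le> Ls (cool G s') + (s' - s) \<and>
     Rs (cool G s) \<le> Rs (cool G s') \<and> Rs (cool G s') \<le> Rs (cool G s) + (s' - s))"

definition cool_regular :: "sg \<Rightarrow> bool" where
  "cool_regular G \<longleftrightarrow> (\<forall>s \<ge> 0. dnz (cool G s)) \<and> cool_stops_mono G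
     \<and> Ls (cool G 0) = Ls G \<and> Rs (cool G 0) = Rs G"

context
  fixes X :: sg and xs ys :: "sg list"
  assumes X: "X = SG (Inl xs) (Inl ys)" and ne: "xs \<noteq> []" "ys \<noteq> []"
    and options_regular: "\<forall>g \<in> set xs \<union> set ys. dnz g \<and> cool_regular g"
begin

lemma option_regular: "g \<in> set xs \<union> set ys \<Longrightarrow> dnz g \<and> cool_regular g"
  using options_regular by blast

lemma dnz_cool_option: "g \<in> set xs \<union> set ys \<Longrightarrow> 0 \<le> s \<Longrightarrow> dnz (cool g s)"
  using option_regular by (auto simp: cool_regular_def)

lemma le_Ls_cool_tilde:
  "0 \<le> s \<Longrightarrow> c \<le> Ls (cool_tilde X s) \<longleftrightarrow> (\<exists>g \<in> set xs. c \<le> Rs (cool g s) - s)"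
  unfolding X cool_tilde_SG using ne dnz_cool_option by (auto simp: le_Ls_iff Rs_shift)

lemma Ls_cool_tilde_le:
  "0 \<le> s \<Longrightarrow> Ls (cool_tilde X s) \<le> c \<longleftrightarrow> (\<forall>g \<in> set xs. Rs (cool g s) - s \<le> c)"
  unfolding X cool_tilde_SG using ne dnz_cool_option by (auto simp: Ls_le_iff Rs_shift)

lemma le_Rs_cool_tilde:
  "0 \<le> s \<Longrightarrow> c \<le> Rs (cool_tilde X s) \<longleftrightarrow> (\<forall>g \<in> set ys. c \<le> Ls (cool g s) + s)"
  unfolding X cool_tilde_SG using ne dnz_cool_option by (auto simp: le_Rs_iff Ls_shift)

lemma Rs_cool_tilde_le:
  "0 \<le> s \<Longrightarrow> Rs (cool_tilde X s) \<le> c \<longleftrightarrow> (\<exists>g \<in> set ys. Ls (cool g s) + s \<le> c)"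
  unfolding X cool_tilde_SG using ne dnz_cool_option by (auto simp: Rs_le_iff Ls_shift)

lemma cool_tilde_stops_mono:
  assumes "0 \<le> s" "s \<le> s'"
  shows "Ls (cool_tilde X s') \<le> Ls (cool_tilde X s) \<and> Ls (cool_tilde X s) \<le> Ls (cool_tilde X s') + (s' - s)
       \<and> Rs (cool_tilde X s) \<le> Rs (cool_tilde X s') \<and> Rs (cool_tilde X s') \<le> Rs (cool_tilde X s) + (s' - s)"
proof -
  have "0 \<le> s'" using assms by simp
  have mono: "Ls (cool g s') \<le> Ls (cool g s)" "Ls (cool g s) \<le> Ls (cool g s') + (s' - s)"
    "Rs (cool g s) \<le> Rs (cool g s')" "Rs (cool g s') \<le> Rs (cool g s) + (s' - s)"
    if "g \<in> set xs \<union> set ys" for g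
    using option_regular[OF that] assms by (auto simp: cool_regular_def cool_stops_mono_def)
  note at_s = le_Ls_cool_tilde[OF assms(1)] Ls_cool_tilde_le[OF assms(1)]
    le_Rs_cool_tilde[OF assms(1)] Rs_cool_tilde_le[OF assms(1)]
  note at_s' = le_Ls_cool_tilde[OF \<open>0 \<le> s'\<close>] Ls_cool_tilde_le[OF \<open>0 \<le> s'\<close>]
    le_Rs_cool_tilde[OF \<open>0 \<le> s'\<close>] Rs_cool_tilde_le[OF \<open>0 \<le> s'\<close>]
  have "Ls (cool_tilde X s') \<le> Ls (cool_tilde X s)"
    using at_s(2)[of "Ls (cool_tilde X s)"] mono(4) unfolding at_s'(2) by force
  moreover have "Ls (cool_tilde X s) \<le> Ls (cool_tilde X s') + (s' - s)"
    using at_s(1)[of "Ls (cool_tilde X s)"] at_s'(2)[of "Ls (cool_tilde X s')"] mono(3) by force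
  moreover have "Rs (cool_tilde X s) \<le> Rs (cool_tilde X s')"
    using at_s(3)[of "Rs (cool_tilde X s)"] mono(2) unfolding at_s'(3) by force
  moreover have "Rs (cool_tilde X s') \<le> Rs (cool_tilde X s) + (s' - s)"
    using at_s(4)[of "Rs (cool_tilde X s)"] at_s'(3)[of "Rs (cool_tilde X s')"] mono(1) by force
  ultimately show ?thesis
    by blast
qed

lemma cool_tilde_stops_0: "Ls (cool_tilde X 0) = Ls X \<and> Rs (cool_tilde X 0) = Rs X"
proof -
  have "Ls (cool g 0) = Ls g \<and> Rs (cool g 0) = Rs g" if "g \<in> set xs \<union> set ys" for g
    using option_regular[OF that] by (simp add: cool_regular_def)
  then have "c \<le> Ls (cool_tilde X 0) \<longleftrightarrow> c \<le> Ls X" "Rs (cool_tilde X 0) \<le> c \<longleftrightarrow> Rs X \<le> c" for c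
    unfolding le_Ls_cool_tilde[OF order_refl] Rs_cool_tilde_le[OF order_refl]
    using ne by (simp_all add: X le_Ls_iff Rs_le_iff)
  then show ?thesis
    by (metis order_antisym order_refl)
qed

lemma cool_tilde_eventually_frozen: "\<exists>b \<ge> 0. Ls (cool_tilde X b) \<le> Rs (cool_tilde X b)"
proof -
  define M where "M = Max (Ls ` set xs)"
  define m where "m = Min (Rs ` set ys)"
  define b where "b = \<bar>M - m\<bar>"
  have "0 \<le> b" unfolding b_def by simp
  have frozen_stops: "Rs (cool g b) \<le> Ls (cool g b)" "Ls (cool g b) \<le> Ls g" "Rs g \<le> Rs (cool g b)"
    if "g \<in> set xs \<union> set ys" for g
    using option_regular[OF that] dnz_Rs_le_Ls[OF dnz_cool_option[OF that \<open>0 \<le> b\<close>]] \<open>0 \<le> b\<close>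
    by (auto simp: cool_regular_def cool_stops_mono_def)
  have "Rs (cool g b) - b \<le> M - b" if "g \<in> set xs" for g
  proof -
    have "Ls g \<le> M" unfolding M_def using that by (intro Max_ge) auto
    then show ?thesis using frozen_stops[of g] that by simp
  qed
  then have "Ls (cool_tilde X b) \<le> M - b"
    unfolding Ls_cool_tilde_le[OF \<open>0 \<le> b\<close>] by blast
  moreover have "m + b \<le> Ls (cool g b) + b" if "g \<in> set ys" for g
  proof -
    have "m \<le> Rs g" unfolding m_def using that by (intro Min_le) auto
    then show ?thesis using frozen_stops[of g] that by simp
  qed
  then have "m + b \<le> Rs (cool_tilde X b)"
    unfolding le_Rs_cool_tilde[OF \<open>0 \<le> b\<close>] by blast
  ultimately show ?thesis
    using \<open>0 \<le> b\<close> by (intro exI[of _ b]) (auto simp: b_def)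
qed

lemma cool_tilde_temp:
  assumes "Rs X \<le> Ls X"
  shows "0 \<le> temp X \<and> Ls (cool_tilde X (temp X)) = Rs (cool_tilde X (temp X))
     \<and> (\<forall>s. 0 \<le> s \<and> s < temp X \<longrightarrow> Rs (cool_tilde X s) < Ls (cool_tilde X s))"
proof -
  define D where "D s = Ls (cool_tilde X s) - Rs (cool_tilde X s)" for s
  have anti: "D s' \<le> D s" if "0 \<le> s" "s \<le> s'" for s s'
    using cool_tilde_stops_mono[OF that] unfolding D_def by linarith
  have lip: "\<bar>D s - D s'\<bar> \<le> 2 * \<bar>s - s'\<bar>" if "0 \<le> s" "s \<le> s'" for s s'
    using cool_tilde_stops_mono[OF that] unfolding D_def by (simp add: abs_if)
  have "2-lipschitz_on {0..} D"
  proof (rule lipschitz_onI)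
    show "dist (D s) (D s') \<le> 2 * dist s s'" if "s \<in> {0..}" "s' \<in> {0..}" for s s'
      using that lip[of s s'] lip[of s' s] by (cases "s \<le> s'") (auto simp: dist_real_def abs_minus_commute)
  qed simp
  then have cont: "continuous_on {0..} D"
    by (rule lipschitz_on_continuous_on)
  have "0 \<le> D 0"
    using cool_tilde_stops_0 assms unfolding D_def by simp
  obtain b where "0 \<le> b" "D b \<le> 0"
    using cool_tilde_eventually_frozen unfolding D_def by auto
  have "temp X = (LEAST s. 0 \<le> s \<and> D s = 0)"
    unfolding temp_def X D_def by simp
  then have "0 \<le> temp X \<and> D (temp X) = 0 \<and> (\<forall>s. 0 \<le> s \<and> s < temp X \<longrightarrow> 0 < D s)"
    using antitone_first_zero[OF cont anti \<open>0 \<le> D 0\<close> \<open>0 \<le> b\<close> \<open>D b \<le> 0\<close>] by simp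
  then show ?thesis
    unfolding D_def by auto
qed

lemma dnz_cool_tilde:
  assumes "Rs X \<le> Ls X" "0 \<le> t" "t \<le> temp X"
  shows "dnz (cool_tilde X t)"
proof -
  have "Rs (cool_tilde X t) \<le> Ls (cool_tilde X t)"
    using cool_tilde_temp[OF assms(1)] assms(2,3) by (cases "t < temp X") auto
  moreover have "dnz (shift c (cool g t))" if "g \<in> set xs \<union> set ys" for g c
    by (rule dnz_shift[OF dnz_cool_option[OF that assms(2)]])
  ultimately show ?thesis
    using ne unfolding X cool_tilde_SG dnz_SG_iff by auto
qed

lemma cool_regular_SG:
  assumes "Rs X \<le> Ls X"
  shows "cool_regular X"
proof -
  define T where "T = temp X"
  have temp: "0 \<le> T" "Ls (cool_tilde X T) = Rs (cool_tilde X T)"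
    using cool_tilde_temp[OF assms] by (simp_all add: T_def)
  have cool_X: "cool X t = (if t \<le> T then cool_tilde X t else num (Ls (cool_tilde X T)))" for t
    by (simp add: X T_def cool_eq_cool_tilde)
  have stops: "Ls (cool X t) = Ls (cool_tilde X (min t T)) \<and> Rs (cool X t) = Rs (cool_tilde X (min t T))"
    for t
    using temp(2) by (simp add: cool_X min_def)
  have "\<forall>t \<ge> 0. dnz (cool X t)"
    using dnz_cool_tilde[OF assms] by (simp add: cool_X T_def)
  moreover have "cool_stops_mono X"
    unfolding cool_stops_mono_def
  proof (intro allI impI)
    fix s s' :: real
    assume "0 \<le> s" "s \<le> s'"
    then have "0 \<le> min s T" "min s T \<le> min s' T" "min s' T - min s T \<le> s' - s"
      using temp(1) by auto
    then show "Ls (cool X s') \<le> Ls (cool X s) \<and> Ls (cool X s) \<le> Ls (cool X s') + (s' - s)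
       \<and> Rs (cool X s) \<le> Rs (cool X s') \<and> Rs (cool X s') \<le> Rs (cool X s) + (s' - s)"
      using cool_tilde_stops_mono[of "min s T" "min s' T"] stops[of s] stops[of s'] by linarith
  qed
  moreover have "Ls (cool X 0) = Ls X \<and> Rs (cool X 0) = Rs X"
    using stops[of 0] cool_tilde_stops_0 temp(1) by (simp add: min_def)
  ultimately show ?thesis
    unfolding cool_regular_def by blast
qed

end


lemma dnz_cool_regular: "dnz X \<Longrightarrow> cool_regular X"
proof (induction rule: dnz_induct)
  case (num s)
  then show ?case by (simp add: cool_regular_def cool_stops_mono_def)
next
  case (SG xs ys)
  then show ?case
    by (intro cool_regular_SG) (auto simp: dnz_SG_iff)
qed

lemma dnz_SG_options_regular:
  "dnz (SG (Inl xs) (Inl ys)) \<Longrightarrow> \<forall>g \<in> set xs \<union> set ys. dnz g \<and> cool_regular g"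
  by (simp add: dnz_SG_iff dnz_cool_regular)

lemma dnz_cool: "dnz X \<Longrightarrow> 0 \<le> t \<Longrightarrow> dnz (cool X t)"
  using dnz_cool_regular by (simp add: cool_regular_def)

lemma temp_SG:
  assumes "dnz X" "X = SG (Inl xs) (Inl ys)"
  shows "0 \<le> temp X \<and> Ls (cool_tilde X (temp X)) = Rs (cool_tilde X (temp X))
     \<and> (\<forall>s. 0 \<le> s \<and> s < temp X \<longrightarrow> Rs (cool_tilde X s) < Ls (cool_tilde X s))"
  using assms cool_tilde_temp[OF assms(2) _ _ dnz_SG_options_regular] dnz_Rs_le_Ls
  by (simp add: dnz_SG_iff)

lemma dnz_not_num_cases:
  assumes "dnz G" "\<not> is_num G"
  obtains xs ys where "G = SG (Inl xs) (Inl ys)" "xs \<noteq> []" "ys \<noteq> []"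
    "\<forall>g \<in> set xs \<union> set ys. dnz g \<and> cool_regular g"
  using assms(1)
proof (cases rule: dnz_cases)
  case (SG xs ys)
  then show thesis
    using that assms(1) dnz_SG_options_regular by blast
qed (use assms(2) in simp)

lemma temp_nonneg: "dnz X \<Longrightarrow> 0 \<le> temp X"
  by (metis dnz_cases temp_SG temp_num order_refl)

lemma cool_after_temp: "dnz X \<Longrightarrow> temp X < t \<Longrightarrow> cool X t = num (Ls (cool X (temp X)))"
  by (erule dnz_cases) (simp_all add: cool_eq_cool_tilde)

lemma cool_frozen_iff:
  assumes "dnz X" "0 \<le> t"
  shows "Ls (cool X t) = Rs (cool X t) \<longleftrightarrow> temp X \<le> t"
  using assms(1)
proof (cases rule: dnz_cases)
  case (SG xs ys)
  then show ?thesis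
    using temp_SG[OF assms(1) SG(1)] assms(2) cool_eq_cool_tilde[of X t]
    by (cases "t < temp X") (auto simp: order.strict_iff_order)
qed (use assms in simp)

lemma cool_stops_after_temp:
  assumes "dnz X" "temp X \<le> t"
  shows "Ls (cool X t) = Ls (cool X (temp X)) \<and> Rs (cool X t) = Ls (cool X (temp X))"
  using cool_frozen_iff[OF assms(1) temp_nonneg[OF assms(1)]] cool_after_temp[OF assms(1)] assms(2)
  by (cases "t = temp X") auto

lemma cool_options_after_temp:
  assumes "dnz G" "G = SG (Inl xs) (Inl ys)" "temp G \<le> s"
  shows "g \<in> set xs \<Longrightarrow> Rs (cool g s) - s \<le> Ls (cool G (temp G))"
    and "g \<in> set ys \<Longrightarrow> Ls (cool G (temp G)) \<le> Ls (cool g s) + s"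
proof -
  define a where "a = temp G"
  have "0 \<le> a"
    using temp_nonneg[OF assms(1)] by (simp add: a_def)
  have ctx: "G = SG (Inl xs) (Inl ys)" "xs \<noteq> []" "ys \<noteq> []" "\<forall>g \<in> set xs \<union> set ys. dnz g \<and> cool_regular g"
    using assms(1,2) dnz_SG_options_regular[of xs ys] by (simp_all add: dnz_SG_iff)
  have frozen: "Ls (cool G a) = Ls (cool_tilde G a)" "Ls (cool G a) = Rs (cool_tilde G a)"
    using temp_SG[OF assms(1,2)] cool_eq_cool_tilde[of G a] by (simp_all add: assms(2) a_def)
  have mono: "Rs (cool g s) \<le> Rs (cool g a) + (s - a)" "Ls (cool g a) \<le> Ls (cool g s) + (s - a)"
    if "g \<in> set xs \<union> set ys" for g
    using ctx(4) that \<open>0 \<le> a\<close> assms(3) by (auto simp: cool_regular_def cool_stops_mono_def a_def)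
  have "\<forall>g \<in> set xs. Rs (cool g a) - a \<le> Ls (cool G a)"
    using Ls_cool_tilde_le[OF ctx \<open>0 \<le> a\<close>, of "Ls (cool G a)"] frozen(1) by simp
  then show "Rs (cool g s) - s \<le> Ls (cool G (temp G))" if "g \<in> set xs"
    using mono(1)[of g] that by (fastforce simp: a_def)
  have "\<forall>g \<in> set ys. Ls (cool G a) \<le> Ls (cool g a) + a"
    using le_Rs_cool_tilde[OF ctx \<open>0 \<le> a\<close>, of "Ls (cool G a)"] frozen(2) by simp
  then show "Ls (cool G (temp G)) \<le> Ls (cool g s) + s" if "g \<in> set ys"
    using mono(2)[of g] that by (fastforce simp: a_def)
qed

lemma cool_stops_eqI:
  fixes V :: "real \<Rightarrow> sg"
  assumes "dnz K" "\<not> is_num K" "0 \<le> m"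
    and tilde: "\<And>s. 0 \<le> s \<Longrightarrow> s \<le> m \<Longrightarrow> Ls (cool_tilde K s) = Ls (V s) \<and> Rs (cool_tilde K s) = Rs (V s)"
    and frozen: "\<And>s. m \<le> s \<Longrightarrow> Ls (V s) = c \<and> Rs (V s) = c"
    and V_nz: "\<And>s. 0 \<le> s \<Longrightarrow> Rs (V s) \<le> Ls (V s)"
  shows "0 \<le> s \<Longrightarrow> Ls (cool K s) = Ls (V s) \<and> Rs (cool K s) = Rs (V s)"
proof -
  obtain xs ys where K: "K = SG (Inl xs) (Inl ys)" "xs \<noteq> []" "ys \<noteq> []"
    "\<forall>k \<in> set xs \<union> set ys. dnz k \<and> cool_regular k"
    using assms(1,2) by (rule dnz_not_num_cases)
  define T where "T = temp K"
  define d where "d = Ls (cool_tilde K T)"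
  have temp_K: "0 \<le> T" "Rs (cool_tilde K T) = d"
    using temp_SG[OF assms(1) K(1)] by (simp_all add: T_def d_def)
  have cool_K: "cool K s = (if s \<le> T then cool_tilde K s else num d)" for s
    using cool_eq_cool_tilde[OF assms(2)] by (simp add: T_def d_def)
  have "T \<le> m"
    using cool_frozen_iff[OF assms(1) \<open>0 \<le> m\<close>] tilde[of m] frozen[of m] \<open>0 \<le> m\<close>
    by (cases "m \<le> T") (auto simp: cool_K T_def)
  have after_T: "Ls (V s) = d \<and> Rs (V s) = d" if "T \<le> s" "s \<le> m" for s
  proof -
    \<comment> \<open>the stops of tilde K_s straddle d, and those of V s, being equal to them, cannot cross\<close>
    have "Ls (cool_tilde K s) \<le> d" "d \<le> Rs (cool_tilde K s)"
      using cool_tilde_stops_mono[OF K temp_K(1) that(1)] temp_K(2) by (simp_all add: d_def)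
    then show ?thesis
      using tilde[of s] V_nz[of s] temp_K(1) that by simp
  qed
  show "Ls (cool K s) = Ls (V s) \<and> Rs (cool K s) = Rs (V s)" if "0 \<le> s"
  proof (cases "s \<le> T")
    case True
    then show ?thesis using tilde[OF that] \<open>T \<le> m\<close> by (simp add: cool_K)
  next
    case False
    then show ?thesis
      using after_T[of s] after_T[of m] frozen[of s] frozen[of m] \<open>T \<le> m\<close>
      by (cases "s \<le> m") (simp_all add: cool_K)
  qed
qed

lemma cool_shift: "dnz H \<Longrightarrow> cool (shift c H) t = shift c (cool H t) \<and> temp (shift c H) = temp H"
proof (induction arbitrary: t rule: dnz_induct)
  case (SG xs ys)
  define H where "H = SG (Inl xs) (Inl ys)"
  have ne: "xs \<noteq> []" "ys \<noteq> []"
    using SG.hyps by (simp_all add: dnz_SG_iff)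
  have tilde_shift: "cool_tilde (shift c H) s = shift c (cool_tilde H s)" for s
    using SG.IH by (simp add: H_def cool_tilde_SG shift_shift add.commute)
  have tilde_stops: "Ls (cool_tilde (shift c H) s) = Ls (cool_tilde H s) + c
      \<and> Rs (cool_tilde (shift c H) s) = Rs (cool_tilde H s) + c" if "0 \<le> s" for s
    unfolding tilde_shift unfolding H_def cool_tilde_SG
    using ne dnz_cool[OF _ that] SG.hyps
    by (intro stops_shift_SG) (auto simp: stops_shift dnz_shift dnz_SG_iff)
  have temp: "temp (shift c H) = temp H"
    unfolding temp_def using tilde_stops by (auto simp: H_def intro!: arg_cong[where f = Least])
  have "\<not> is_num H" "\<not> is_num (shift c H)"
    by (simp_all add: H_def)
  then have "cool (shift c H) t = shift c (cool H t)"
    using tilde_stops[OF temp_nonneg[OF SG.hyps[folded H_def]]]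
    by (simp add: cool_eq_cool_tilde temp tilde_shift)
  with temp show ?case
    unfolding H_def by blast
qed simp

section \<open>Cooling a sum\<close>

lemma gsum_stops_commute:
  "dnz X \<Longrightarrow> dnz Y \<Longrightarrow> Ls (gsum X Y) = Ls (gsum Y X) \<and> Rs (gsum X Y) = Rs (gsum Y X)"
proof (induction rule: dnz_pair_induct)
  case (SG_SG X Y xs ys us vs)
  have XY: "gsum X Y = SG (Inl (map (\<lambda>g. gsum g Y) xs @ map (gsum X) us))
                          (Inl (map (\<lambda>g. gsum g Y) ys @ map (gsum X) vs))"
    and YX: "gsum Y X = SG (Inl (map (\<lambda>h. gsum h X) us @ map (gsum Y) xs))
                          (Inl (map (\<lambda>h. gsum h X) vs @ map (gsum Y) ys))"
    using SG_SG.hyps(1-6) by (simp_all add: gsum_SG)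
  have "(\<lambda>g. Rs (gsum g Y)) ` set xs = (\<lambda>g. Rs (gsum Y g)) ` set xs"
    "(\<lambda>h. Rs (gsum X h)) ` set us = (\<lambda>h. Rs (gsum h X)) ` set us"
    "(\<lambda>g. Ls (gsum g Y)) ` set ys = (\<lambda>g. Ls (gsum Y g)) ` set ys"
    "(\<lambda>h. Ls (gsum X h)) ` set vs = (\<lambda>h. Ls (gsum h X)) ` set vs"
    using SG_SG.IH by (auto intro!: image_cong)
  then show ?case
    unfolding XY YX
    by (intro conjI Ls_SG_cong Rs_SG_cong) (simp_all add: image_Un image_image Un_commute)
qed (simp_all add: gsum_num_left gsum_num_right)

text \<open>The game tilde (G + H)_s with the cooled options (G' + H)_s and (G + H')_s replaced
  by G'_s + H_s and G_s + H'_s; by induction the two games have the same stops.\<close>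

definition tilde_sum :: "sg \<Rightarrow> sg \<Rightarrow> real \<Rightarrow> sg" where
  "tilde_sum G H s = SG
     (Inl (map (\<lambda>g. shift (- s) (gsum (cool g s) (cool H s))) (lopts G)
         @ map (\<lambda>h. shift (- s) (gsum (cool G s) (cool h s))) (lopts H)))
     (Inl (map (\<lambda>g. shift s (gsum (cool g s) (cool H s))) (ropts G)
         @ map (\<lambda>h. shift s (gsum (cool G s) (cool h s))) (ropts H)))"

lemma tilde_sum_commute:
  assumes "dnz G" "dnz H" "0 \<le> s"
  shows "Ls (tilde_sum G H s) = Ls (tilde_sum H G s) \<and> Rs (tilde_sum G H s) = Rs (tilde_sum H G s)"
proof -
  have options: "dnz g" if "g \<in> set (lopts X) \<union> set (ropts X)" "dnz X" for g X
    using \<open>dnz X\<close> that(1) by (cases rule: dnz_cases) (auto simp: lopts_def ropts_def num_def)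
  have "Rs (shift c (gsum (cool g s) (cool h s))) = Rs (shift c (gsum (cool h s) (cool g s)))"
    "Ls (shift c (gsum (cool g s) (cool h s))) = Ls (shift c (gsum (cool h s) (cool g s)))"
    if "dnz g" "dnz h" for g h c
    using that assms(3) gsum_stops_commute by (simp_all add: Ls_shift Rs_shift dnz_gsum dnz_cool)
  with options[OF _ assms(1)] options[OF _ assms(2)] assms(1,2) show ?thesis
    unfolding tilde_sum_def
    by (intro conjI Ls_SG_cong Rs_SG_cong) (auto simp: image_Un image_image Un_commute intro!: image_cong)
qed

lemma tilde_sum_hot:
  assumes "dnz G" "dnz H" "G = SG (Inl xs) (Inl ys)" "H = SG (Inl us) (Inl vs)"
    and "0 \<le> s" "s \<le> temp G" "s \<le> temp H"
  shows "tilde_sum G H s = gsum (cool G s) (cool H s)"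
proof -
  have "cool G s = SG (Inl (map (\<lambda>g. shift (- s) (cool g s)) xs)) (Inl (map (\<lambda>g. shift s (cool g s)) ys))"
    "cool H s = SG (Inl (map (\<lambda>h. shift (- s) (cool h s)) us)) (Inl (map (\<lambda>h. shift s (cool h s)) vs))"
    using assms(3,4,6,7) by (simp_all add: cool_SG_upto_temp)
  then show ?thesis
    using assms(1-4) dnz_cool[OF assms(1,5)] dnz_cool[OF assms(2,5)] dnz_cool[OF _ assms(5)]
    by (simp add: tilde_sum_def lopts_def ropts_def dnz_SG_iff gsum_SG gsum_shift_left gsum_shift_right)
qed

lemma gsum_num_cool_SG:
  assumes "dnz H" "H = SG (Inl us) (Inl vs)" "0 \<le> s" "s \<le> temp H"
  shows "gsum (num c) (cool H s) = SG (Inl (map (\<lambda>h. shift (- s) (gsum (num c) (cool h s))) us))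
                                        (Inl (map (\<lambda>h. shift s (gsum (num c) (cool h s))) vs))"
  using assms dnz_cool[OF assms(1,3)] dnz_cool[OF _ assms(3)]
  by (simp add: cool_SG_upto_temp gsum_num_left dnz_SG_iff shift_shift add.commute)

lemma tilde_sum_left_frozen:
  assumes "dnz G" "dnz H" "G = SG (Inl xs) (Inl ys)" "H = SG (Inl us) (Inl vs)"
    and "temp G < s" "s \<le> temp H"
  shows "Ls (tilde_sum G H s) = Ls (gsum (cool G s) (cool H s))
    \<and> Rs (tilde_sum G H s) = Rs (gsum (cool G s) (cool H s))"
proof -
  define c where "c = Ls (cool G (temp G))"
  define V where "V = gsum (num c) (cool H s)"
  have "0 \<le> s"
    using temp_nonneg[OF assms(1)] assms(5) by simp
  have cool_G: "cool G s = num c"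
    using cool_after_temp[OF assms(1,5)] by (simp add: c_def)
  have "dnz (cool H s)"
    using dnz_cool[OF assms(2) \<open>0 \<le> s\<close>] .
  then have stops_V: "Ls V = Ls (cool H s) + c" "Rs V = Rs (cool H s) + c"
    by (simp_all add: V_def gsum_num_left Ls_shift Rs_shift)
  have dnz_cool_opt: "dnz (cool g s)" if "g \<in> set xs \<union> set ys" for g
    using assms(1,3) that dnz_cool[OF _ \<open>0 \<le> s\<close>] by (auto simp: dnz_SG_iff)
  note after_temp = cool_options_after_temp[OF assms(1,3) less_imp_le[OF assms(5)]]
  have "Rs (shift (- s) (gsum (cool g s) (cool H s))) \<le> Ls V" if "g \<in> set xs" for g
    using after_temp(1)[OF that] stops_V dnz_cool_opt[of g] that \<open>dnz (cool H s)\<close>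
      gsum_stops_upper[OF dnz_cool_opt[of g] \<open>dnz (cool H s)\<close>]
    by (simp add: Rs_shift dnz_gsum c_def)
  moreover have "Rs V \<le> Ls (shift s (gsum (cool g s) (cool H s)))" if "g \<in> set ys" for g
    using after_temp(2)[OF that] stops_V dnz_cool_opt[of g] that \<open>dnz (cool H s)\<close>
      gsum_stops_lower[OF dnz_cool_opt[of g] \<open>dnz (cool H s)\<close>]
    by (simp add: Ls_shift dnz_gsum c_def)
  moreover have "tilde_sum G H s = SG
     (Inl (map (\<lambda>g. shift (- s) (gsum (cool g s) (cool H s))) xs
         @ map (\<lambda>h. shift (- s) (gsum (num c) (cool h s))) us))
     (Inl (map (\<lambda>g. shift s (gsum (cool g s) (cool H s))) ys
         @ map (\<lambda>h. shift s (gsum (num c) (cool h s))) vs))"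
    by (simp add: tilde_sum_def assms(3,4) lopts_def ropts_def cool_G[unfolded assms(3)])
  ultimately show ?thesis
    using gsum_num_cool_SG[OF assms(2,4) \<open>0 \<le> s\<close> assms(6)] assms(2,4)
    unfolding cool_G V_def by (simp add: dnz_SG_iff Ls_SG_append_dominated Rs_SG_append_dominated)
qed

lemma tilde_sum_stops:
  assumes "dnz G" "dnz H" "G = SG (Inl xs) (Inl ys)" "H = SG (Inl us) (Inl vs)"
    and "0 \<le> s" "s \<le> max (temp G) (temp H)"
  shows "Ls (tilde_sum G H s) = Ls (gsum (cool G s) (cool H s))
    \<and> Rs (tilde_sum G H s) = Rs (gsum (cool G s) (cool H s))"
proof -
  consider "s \<le> temp G" "s \<le> temp H" | "temp G < s" "s \<le> temp H" | "temp H < s" "s \<le> temp G"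
    using assms(6) by linarith
  then show ?thesis
  proof cases
    case 1
    then show ?thesis using tilde_sum_hot[OF assms(1-5)] by simp
  next
    case 2
    then show ?thesis using tilde_sum_left_frozen[OF assms(1-4)] by blast
  next
    case 3
    then show ?thesis
      using tilde_sum_left_frozen[OF assms(2,1,4,3) 3] tilde_sum_commute[OF assms(1,2,5)]
        gsum_stops_commute[OF dnz_cool[OF assms(1,5)] dnz_cool[OF assms(2,5)]] by simp
  qed
qed

lemma gsum_cool_frozen:
  assumes "dnz G" "dnz H" "max (temp G) (temp H) \<le> s"
  shows "Ls (gsum (cool G s) (cool H s)) = Ls (cool G (temp G)) + Ls (cool H (temp H))
    \<and> Rs (gsum (cool G s) (cool H s)) = Ls (cool G (temp G)) + Ls (cool H (temp H))"
proof -
  have "0 \<le> s"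
    using temp_nonneg[OF assms(1)] assms(3) by simp
  have G: "Ls (cool G s) = Ls (cool G (temp G)) \<and> Rs (cool G s) = Ls (cool G (temp G))"
    using cool_stops_after_temp[OF assms(1), of s] assms(3) by simp
  have H: "Ls (cool H s) = Ls (cool H (temp H)) \<and> Rs (cool H s) = Ls (cool H (temp H))"
    using cool_stops_after_temp[OF assms(2), of s] assms(3) by simp
  show ?thesis
    using gsum_stops_frozen[OF dnz_cool[OF assms(1) \<open>0 \<le> s\<close>] dnz_cool[OF assms(2) \<open>0 \<le> s\<close>]] G H
    by simp
qed

definition cools_additively :: "sg \<Rightarrow> sg \<Rightarrow> bool" where
  "cools_additively G H \<longleftrightarrow> (\<forall>s \<ge> 0.
     Ls (cool (gsum G H) s) = Ls (gsum (cool G s) (cool H s)) \<and>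
     Rs (cool (gsum G H) s) = Rs (gsum (cool G s) (cool H s)))"

context
  fixes G H :: sg and xs ys us vs :: "sg list"
  assumes G: "G = SG (Inl xs) (Inl ys)" and H: "H = SG (Inl us) (Inl vs)"
    and dnz_G: "dnz G" and dnz_H: "dnz H"
    and IH_left: "\<forall>g \<in> set xs \<union> set ys. cools_additively g H"
    and IH_right: "\<forall>h \<in> set us \<union> set vs. cools_additively G h"
begin

lemma cool_tilde_gsum_stops:
  assumes "0 \<le> s"
  shows "Ls (cool_tilde (gsum G H) s) = Ls (tilde_sum G H s)
    \<and> Rs (cool_tilde (gsum G H) s) = Rs (tilde_sum G H s)"
proof -
  have ne: "xs \<noteq> []" "ys \<noteq> []" "us \<noteq> []" "vs \<noteq> []"
    and options: "\<forall>g \<in> set xs \<union> set ys. dnz g" "\<forall>h \<in> set us \<union> set vs. dnz h"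
    using dnz_G dnz_H by (simp_all add: G H dnz_SG_iff)
  have stops_shift_cool: "Rs (shift c (cool (gsum X Y) s)) = Rs (shift c (gsum (cool X s) (cool Y s)))"
    "Ls (shift c (cool (gsum X Y) s)) = Ls (shift c (gsum (cool X s) (cool Y s)))"
    if "dnz X" "dnz Y" "cools_additively X Y" for X Y c
    using that assms by (simp_all add: cools_additively_def Ls_shift Rs_shift dnz_cool dnz_gsum)
  have sum: "gsum G H = SG (Inl (map (\<lambda>g. gsum g H) xs @ map (gsum G) us))
                           (Inl (map (\<lambda>g. gsum g H) ys @ map (gsum G) vs))"
    using ne by (simp add: G H gsum_SG)
  show ?thesis
    unfolding sum cool_tilde_SG tilde_sum_def
    using IH_left IH_right options dnz_G dnz_H stops_shift_cool
    by (intro conjI Ls_SG_cong Rs_SG_cong) (auto simp: G H lopts_def ropts_def image_Un image_image intro!: image_cong)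
qed

lemma cools_additively_SG: "cools_additively G H"
proof -
  define m where "m = max (temp G) (temp H)"
  have "0 \<le> m"
    using temp_nonneg[OF dnz_G] by (simp add: m_def)
  have "\<not> is_num (gsum G H)"
    using dnz_G by (simp add: G H gsum_SG dnz_SG_iff)
  have below_m: "Ls (cool_tilde (gsum G H) s) = Ls (gsum (cool G s) (cool H s))
      \<and> Rs (cool_tilde (gsum G H) s) = Rs (gsum (cool G s) (cool H s))" if "0 \<le> s" "s \<le> m" for s
    using cool_tilde_gsum_stops[OF that(1)] tilde_sum_stops[OF dnz_G dnz_H G H that(1)]
      that(2) by (simp add: m_def)
  have above_m: "Ls (gsum (cool G s) (cool H s)) = Ls (gsum (cool G m) (cool H m))
      \<and> Rs (gsum (cool G s) (cool H s)) = Ls (gsum (cool G m) (cool H m))" if "m \<le> s" for s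
    using gsum_cool_frozen[OF dnz_G dnz_H] that by (simp add: m_def)
  have nz: "Rs (gsum (cool G s) (cool H s)) \<le> Ls (gsum (cool G s) (cool H s))" if "0 \<le> s" for s
    using dnz_G dnz_H that by (simp add: dnz_Rs_le_Ls dnz_gsum dnz_cool)
  show ?thesis
    unfolding cools_additively_def
    using cool_stops_eqI[where V = "\<lambda>s. gsum (cool G s) (cool H s)",
        OF dnz_gsum[OF dnz_G dnz_H] \<open>\<not> is_num (gsum G H)\<close> \<open>0 \<le> m\<close> below_m above_m nz]
    by blast
qed

end

lemma dnz_cools_additively: "dnz G \<Longrightarrow> dnz H \<Longrightarrow> cools_additively G H"
proof (induction rule: dnz_pair_induct)
  case (num_left x H)
  then show ?case
    by (simp add: cools_additively_def gsum_num_left cool_shift dnz_cool)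
next
  case (num_right G y)
  then show ?case
    by (simp add: cools_additively_def gsum_num_right cool_shift dnz_cool)
next
  case (SG_SG G H xs ys us vs)
  then show ?case
    by (intro cools_additively_SG) auto
qed

lemma temp_gsum_le:
  assumes "dnz G" "dnz H"
  shows "temp (gsum G H) \<le> max (temp G) (temp H)"
proof -
  define m where "m = max (temp G) (temp H)"
  have "0 \<le> m"
    using temp_nonneg[OF assms(1)] by (simp add: m_def)
  have "Ls (gsum (cool G m) (cool H m)) = Rs (gsum (cool G m) (cool H m))"
    using gsum_cool_frozen[OF assms] by (simp add: m_def)
  then have "Ls (cool (gsum G H) m) = Rs (cool (gsum G H) m)"
    using dnz_cools_additively[OF assms] \<open>0 \<le> m\<close> by (simp add: cools_additively_def)
  then show ?thesis
    using cool_frozen_iff[OF dnz_gsum[OF assms] \<open>0 \<le> m\<close>] by (simp add: m_def)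
qed

lemma temp_gsum_eq_left:
  assumes "dnz G" "dnz H" "temp H < temp G"
  shows "temp (gsum G H) = temp G"
proof -
  define s where "s = max (temp (gsum G H)) (temp H)"
  have "0 \<le> s"
    using temp_nonneg[OF assms(2)] by (simp add: s_def)
  have "Ls (cool (gsum G H) s) = Rs (cool (gsum G H) s)" "Ls (cool H s) = Rs (cool H s)"
    using cool_frozen_iff[OF dnz_gsum[OF assms(1,2)] \<open>0 \<le> s\<close>] cool_frozen_iff[OF assms(2) \<open>0 \<le> s\<close>]
    by (simp_all add: s_def)
  then have "Ls (cool G s) = Rs (cool G s)"
    using dnz_cools_additively[OF assms(1,2)] \<open>0 \<le> s\<close>
      gsum_stops_frozen[OF dnz_cool[OF assms(1) \<open>0 \<le> s\<close>] dnz_cool[OF assms(2) \<open>0 \<le> s\<close>]]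
    by (simp add: cools_additively_def)
  then have "temp G \<le> s"
    using cool_frozen_iff[OF assms(1) \<open>0 \<le> s\<close>] by simp
  then show ?thesis
    using temp_gsum_le[OF assms(1,2)] assms(3) by (simp add: s_def)
qed

lemma cool_gsum_at_temp:
  assumes "dnz G" "dnz H"
  shows "Ls (cool (gsum G H) (temp (gsum G H))) = Ls (gsum (cool G (temp G)) (cool H (temp H)))
    \<and> Rs (cool (gsum G H) (temp (gsum G H))) = Rs (gsum (cool G (temp G)) (cool H (temp H)))"
proof -
  define m where "m = max (temp G) (temp H)"
  define c where "c = Ls (cool G (temp G)) + Ls (cool H (temp H))"
  have "0 \<le> m"
    using temp_nonneg[OF assms(1)] by (simp add: m_def)
  have "Ls (cool (gsum G H) m) = c \<and> Rs (cool (gsum G H) m) = c"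
    using dnz_cools_additively[OF assms] gsum_cool_frozen[OF assms] \<open>0 \<le> m\<close>
    by (simp add: cools_additively_def c_def m_def)
  then have "Ls (cool (gsum G H) (temp (gsum G H))) = c \<and> Rs (cool (gsum G H) (temp (gsum G H))) = c"
    using cool_stops_after_temp[OF dnz_gsum[OF assms], of m] temp_gsum_le[OF assms]
      cool_frozen_iff[OF dnz_gsum[OF assms] temp_nonneg[OF dnz_gsum[OF assms]]]
    by (simp add: m_def)
  moreover have "Ls (gsum (cool G (temp G)) (cool H (temp H))) = c
      \<and> Rs (gsum (cool G (temp G)) (cool H (temp H))) = c"
    using gsum_stops_frozen[OF dnz_cool[OF assms(1) temp_nonneg[OF assms(1)]]
        dnz_cool[OF assms(2) temp_nonneg[OF assms(2)]]]
      cool_frozen_iff[OF assms(1) temp_nonneg[OF assms(1)]] cool_frozen_iff[OF assms(2) temp_nonneg[OF assms(2)]]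
    by (simp add: c_def)
  ultimately show ?thesis
    by simp
qed

theorem mainTheorem3:
  fixes G H :: sg
  assumes "is_sg G" and "is_sg H"
    and "dicotic G" and "dicotic H"
    and "nonzugzwang G" and "nonzugzwang H"
    and "terminal_numbers G" and "terminal_numbers H"
  shows "(\<forall>t::real. t \<ge> 0 \<longrightarrow>
            Ls (cool (gsum G H) t) = Ls (gsum (cool G t) (cool H t)) \<and>
            Rs (cool (gsum G H) t) = Rs (gsum (cool G t) (cool H t)))
       \<and> temp (gsum G H) \<le> max (temp G) (temp H)
       \<and> (temp H < temp G \<longrightarrow> temp (gsum G H) = temp G)
       \<and> Ls (cool (gsum G H) (temp (gsum G H))) = Ls (gsum (cool G (temp G)) (cool H (temp H)))
       \<and> Rs (cool (gsum G H) (temp (gsum G H))) = Rs (gsum (cool G (temp G)) (cool H (temp H)))"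
proof -
  have "dnz G" "dnz H"
    using assms by (simp_all add: dnz_def)
  then show ?thesis
    using dnz_cools_additively temp_gsum_le temp_gsum_eq_left cool_gsum_at_temp
    by (simp add: cools_additively_def)
qed

end
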